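(* Let $K\ge2$, $1<\theta<\frac32$, $T>0$, and let $\boldsymbol\xi=(\xi_1,\dots,\xi_K)$ be $C^1$ on $[T,\infty)$ satisfying $$\dot\xi_1=-t^{-1}\gamma_1\big(e^{-(\xi_2-\xi_1)}-1\big)+r_1(t),$$ $$\dot\xi_k=t^{-1}\Big(\gamma_{k-1}\big(e^{-(\xi_k-\xi_{k-1})}-1\big)-\gamma_k\big(e^{-(\xi_{k+1}-\xi_k)}-1\big)\Big)+r_k(t),\quad 2\le k\le K-1,$$ $$\dot\xi_K=t^{-1}\gamma_{K-1}\big(e^{-(\xi_K-\xi_{K-1})}-1\big)+r_K(t),$$ where $\gamma_k=\frac{k(K-k)}{2}$ and $|r_k(t)|\le Ct^{-\theta}$, and assume $\big|\sum_{k=1}^K\xi_k(t)\big|\le Ct^{-\theta+1}$ for all $t\ge T$. Then $\xi_k(t)=O(t^{-\theta+1})$ as $t\to\infty$ for every $k=1,\dots,K$. *)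

theory Defs
  imports "HOL-Analysis.Analysis" "HOL-Library.Landau_Symbols"
begin

definition gam :: "nat \<Rightarrow> nat \<Rightarrow> real" where
  "gam K k = real k * (real K - real k) / 2"

end

theory Submission
  imports Defs
begin

text \<open>Write \<open>y\<^sub>k = \<xi>\<^sub>k\<^sub>+\<^sub>1 - \<xi>\<^sub>k\<close> for the gaps and \<open>F\<^sub>k = \<gamma>\<^sub>k (exp (- y\<^sub>k) - 1)\<close> for the fluxes,
  so that \<open>\<xi>\<^sub>k' = (F\<^sub>k\<^sub>-\<^sub>1 - F\<^sub>k) / t + r\<^sub>k\<close> with \<open>F\<^sub>0 = F\<^sub>K = 0\<close>. The energy
  \<open>E = \<Sum>\<^sub>k \<gamma>\<^sub>k (exp (- y\<^sub>k) - 1 + y\<^sub>k)\<close> satisfies \<open>E' = - D / t - \<Sum>\<^sub>k (F\<^sub>k\<^sub>-\<^sub>1 - F\<^sub>k) r\<^sub>k\<close> with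
  dissipation \<open>D = \<Sum>\<^sub>k (F\<^sub>k\<^sub>-\<^sub>1 - F\<^sub>k)\<^sup>2\<close>, and a discrete Hardy inequality gives
  \<open>D \<ge> exp (- Y) E\<close> whenever all gaps are at most \<open>Y\<close>. The resulting differential inequality
  \<open>E' \<le> - (a / t) E + B t\<^sup>1\<^sup>-\<^sup>2\<^sup>\<theta>\<close> is used three times: with \<open>a = 0\<close> (so \<open>E\<close> and hence the
  gaps are bounded above), with a small \<open>a > 0\<close> (so \<open>E \<rightarrow> 0\<close> and the gaps become small), and with
  \<open>a = \<theta> - 1/2 > 2\<theta> - 2\<close>, which yields \<open>E = O(t\<^sup>2\<^sup>-\<^sup>2\<^sup>\<theta>)\<close>. As \<open>E\<close> dominates \<open>y\<^sub>k\<^sup>2 / 8\<close>, the gaps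
  are \<open>O(t\<^sup>1\<^sup>-\<^sup>\<theta>)\<close>, and the bound on \<open>\<Sum>\<^sub>k \<xi>\<^sub>k\<close> then controls every \<open>\<xi>\<^sub>k\<close>.\<close>

definition expgap :: "real \<Rightarrow> real" where
  "expgap y = exp (- y) - 1 + y"

lemma expgap_nonneg: "0 \<le> expgap y"
  using exp_ge_add_one_self[of "- y"] by (simp add: expgap_def)

lemma expgap_ge_linear: "y - 1 \<le> expgap y"
  by (simp add: expgap_def less_imp_le)

lemma expgap_ge_square:
  assumes "y \<le> 2"
  shows "y\<^sup>2 / 4 \<le> expgap y"
proof -
  have "1 - y/2 \<le> exp (- y/2)"
    using exp_ge_add_one_self[of "- y/2"] by simp
  then have "(1 - y/2)\<^sup>2 \<le> (exp (- y/2))\<^sup>2"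
    using assms by (intro power_mono) auto
  also have "(exp (- y/2))\<^sup>2 = exp (- y)"
    by (simp add: power2_eq_square flip: exp_add)
  finally show ?thesis
    by (simp add: expgap_def power2_eq_square algebra_simps)
qed

lemma expgap_mono:
  assumes "0 \<le> x" "x \<le> y"
  shows "expgap x \<le> expgap y"
proof -
  have "exp (- x) * (1 + (x - y)) \<le> exp (- x) * exp (x - y)"
    using exp_ge_add_one_self[of "x - y"] by (intro mult_left_mono) auto
  also have "\<dots> = exp (- y)"
    by (simp flip: exp_add)
  finally have "exp (- x) * (1 + (x - y)) \<le> exp (- y)" .
  moreover have "0 \<le> (1 - exp (- x)) * (y - x)"
    using assms by simp
  ultimately show ?thesis
    by (simp add: expgap_def algebra_simps)
qed

lemma exp_neg_mult_expgap_le: "exp (- y) * expgap y \<le> (exp (- y) - 1)\<^sup>2"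
proof -
  have "0 \<le> exp y - 1 - y"
    using exp_ge_add_one_self[of y] by linarith
  then have "0 \<le> exp (- y) * (exp y - 1 - y)"
    by simp
  also have "exp (- y) * (exp y - 1 - y) = 1 - exp (- y) - y * exp (- y)"
    by (simp add: algebra_simps exp_minus)
  finally show ?thesis
    by (simp add: expgap_def power2_eq_square algebra_simps)
qed

lemma neg_mult_le_weighted_squares:
  fixes e t d r :: real
  assumes "e > 0" "t > 0"
  shows "- (d * r) \<le> (e/t) * d\<^sup>2 + (t / (4*e)) * r\<^sup>2"
proof -
  have "0 \<le> (2*e*d + t*r)\<^sup>2 / (4*e*t)"
    using assms by simp
  also have "\<dots> = (e/t) * d\<^sup>2 + (t / (4*e)) * r\<^sup>2 + d * r"
    using assms by (simp add: field_simps power2_eq_square)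
  finally show ?thesis by simp
qed

lemma diff_mult_diff_sq_div_le:
  fixes a b p q :: real
  assumes "p \<ge> 0" "q \<ge> 0" "p = 0 \<Longrightarrow> a = 0" "q = 0 \<Longrightarrow> b = 0"
  shows "(p - q) * (a\<^sup>2/p - b\<^sup>2/q) \<le> (a - b)\<^sup>2"
proof (cases "p = 0 \<or> q = 0")
  case True
  then show ?thesis
    using assms by (auto simp: power2_eq_square)
next
  case False
  have "0 \<le> p * q * (a/p - b/q)\<^sup>2"
    using assms by simp
  also have "\<dots> = (a - b)\<^sup>2 - (p - q) * (a\<^sup>2/p - b\<^sup>2/q)"
    using False by (simp add: field_simps power2_eq_square)
  finally show ?thesis by simp
qed

lemma sum_diff_mult_diff_eq:
  fixes \<phi> q :: "nat \<Rightarrow> real"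
  assumes "n \<ge> 1"
  shows "(\<Sum>k=1..n. (\<phi> (k-1) - \<phi> k) * (q (k-1) - q k)) =
    (\<Sum>k=1..n-1. q k * (2 * \<phi> k - \<phi> (k-1) - \<phi> (k+1)))
      + q 0 * (\<phi> 0 - \<phi> 1) + q n * (\<phi> n - \<phi> (n-1))"
  using assms
proof (induction n rule: nat_induct_at_least)
  case base
  then show ?case by (simp add: algebra_simps)
next
  case (Suc n)
  have "(\<Sum>k=1..Suc n - 1. q k * (2 * \<phi> k - \<phi> (k-1) - \<phi> (k+1)))
      = (\<Sum>k=1..n-1. q k * (2 * \<phi> k - \<phi> (k-1) - \<phi> (k+1))) + q n * (2 * \<phi> n - \<phi> (n-1) - \<phi> (n+1))"
    using Suc.hyps by (cases n) auto
  then show ?case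
    using Suc.IH by (simp add: algebra_simps)
qed

lemma sum_mult_forward_diff_eq:
  fixes F x :: "nat \<Rightarrow> real"
  assumes "n \<ge> 1"
  shows "(\<Sum>k=1..n-1. F k * (x (k+1) - x k)) = (\<Sum>k=1..n. (F (k-1) - F k) * x k) - F 0 * x 1 + F n * x n"
  using assms
proof (induction n rule: nat_induct_at_least)
  case base
  then show ?case by (simp add: algebra_simps)
next
  case (Suc n)
  have "(\<Sum>k=1..Suc n - 1. F k * (x (k+1) - x k)) = (\<Sum>k=1..n-1. F k * (x (k+1) - x k)) + F n * (x (n+1) - x n)"
    using Suc.hyps by (cases n) auto
  then show ?case
    using Suc.IH by (simp add: algebra_simps)
qed

lemma gam_nonneg: "k \<le> K \<Longrightarrow> 0 \<le> gam K k"
  by (simp add: gam_def)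

lemma gam_ge_half: "1 \<le> k \<Longrightarrow> k < K \<Longrightarrow> 1/2 \<le> gam K k"
proof -
  assume "1 \<le> k" "k < K"
  then have "1 * 1 \<le> real k * (real K - real k)"
    by (intro mult_mono) auto
  then show ?thesis by (simp add: gam_def)
qed

lemma gam_second_difference: "1 \<le> k \<Longrightarrow> 2 * gam K k - gam K (k-1) - gam K (k+1) = 1"
  by (cases k) (auto simp: gam_def field_simps)

text \<open>A discrete Hardy inequality: the weights \<open>1 / gam K k\<close> are admissible because
  \<open>gam K\<close> vanishes at both ends and has second difference \<open>-1\<close>.\<close>

lemma sum_sq_div_gam_le_sum_sq_diff:
  fixes F :: "nat \<Rightarrow> real"
  assumes "K \<ge> 1" "F 0 = 0" "F K = 0"
  shows "(\<Sum>k=1..K-1. (F k)\<^sup>2 / gam K k) \<le> (\<Sum>k=1..K. (F (k-1) - F k)\<^sup>2)"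
proof -
  define q where "q j = (F j)\<^sup>2 / gam K j" for j
  have "(\<Sum>k=1..K-1. q k) = (\<Sum>k=1..K-1. q k * (2 * gam K k - gam K (k-1) - gam K (k+1)))"
    using gam_second_difference[of _ K] by (intro sum.cong) auto
  also have "\<dots> = (\<Sum>k=1..K. (gam K (k-1) - gam K k) * (q (k-1) - q k))"
    using sum_diff_mult_diff_eq[OF assms(1), of "gam K" q] assms by (simp add: q_def)
  also have "\<dots> \<le> (\<Sum>k=1..K. (F (k-1) - F k)\<^sup>2)"
  proof (rule sum_mono)
    fix k assume k: "k \<in> {1..K}"
    have vanish: "F j = 0" if "j \<le> K" "gam K j = 0" for j
      using that assms by (cases "j = 0"; cases "j = K") (auto simp: gam_def)
    show "(gam K (k-1) - gam K k) * (q (k-1) - q k) \<le> (F (k-1) - F k)\<^sup>2"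
      unfolding q_def using k by (intro diff_mult_diff_sq_div_le gam_nonneg vanish) auto
  qed
  finally show ?thesis
    unfolding q_def .
qed

lemma powr_weighted_nonincreasing:
  fixes E E' :: "real \<Rightarrow> real"
  assumes t0: "t0 > 0" and cont: "continuous_on {t0..} E"
    and deriv: "\<And>t. t > t0 \<Longrightarrow> (E has_real_derivative E' t) (at t)"
    and ineq: "\<And>t. t > t0 \<Longrightarrow> E' t \<le> - (a/t) * E t + B * t powr (- p)"
    and ne: "a + 1 - p \<noteq> 0" and t: "t0 \<le> t"
  shows "t powr a * E t - B / (a+1-p) * t powr (a+1-p) \<le> t0 powr a * E t0 - B / (a+1-p) * t0 powr (a+1-p)"
proof -
  define \<Phi> where "\<Phi> x = x powr a * E x - B / (a+1-p) * x powr (a+1-p)" for x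
  have "\<Phi> t \<le> \<Phi> t0"
  proof (rule DERIV_nonpos_imp_decreasing_open[OF t])
    fix x assume x: "t0 < x" "x < t"
    have "x > 0" using x t0 by linarith
    have "(\<Phi> has_real_derivative
        a * x powr (a-1) * E x + x powr a * E' x - B / (a+1-p) * ((a+1-p) * x powr (a+1-p-1))) (at x)"
      unfolding \<Phi>_def
      by (rule derivative_eq_intros DERIV_fun_powr deriv[OF x(1)] DERIV_ident refl | use \<open>x > 0\<close> in simp)+
    moreover have "a * x powr (a-1) * E x + x powr a * E' x - B / (a+1-p) * ((a+1-p) * x powr (a+1-p-1))
        = x powr a * (E' x + (a/x) * E x - B * x powr (- p))"
    proof -
      have "x powr (a-1) = x powr a / x" "x powr (a+1-p-1) = x powr a * x powr (- p)"
        using \<open>x > 0\<close> by (simp_all add: powr_diff flip: powr_add)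
      then show ?thesis
        using ne by (simp add: field_simps)
    qed
    moreover have "x powr a * (E' x + (a/x) * E x - B * x powr (- p)) \<le> 0"
      using ineq[OF x(1)] by (intro mult_nonneg_nonpos) auto
    ultimately show "\<exists>y. (\<Phi> has_real_derivative y) (at x) \<and> y \<le> 0"
      by auto
  next
    have "continuous_on {t0..t} E"
      using cont by (rule continuous_on_subset) auto
    then show "continuous_on {t0..t} \<Phi>"
      unfolding \<Phi>_def using t0 by (intro continuous_intros) auto
  qed
  then show ?thesis
    unfolding \<Phi>_def .
qed

lemma decay_at_damping_rate:
  fixes E E' :: "real \<Rightarrow> real"
  assumes "t0 > 0" "continuous_on {t0..} E"
    and "\<And>t. t > t0 \<Longrightarrow> (E has_real_derivative E' t) (at t)"
    and "\<And>t. t > t0 \<Longrightarrow> E' t \<le> - (a/t) * E t + B * t powr (- p)"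
    and "B \<ge> 0" "a < p - 1"
  shows "\<exists>M. \<forall>t\<ge>t0. E t \<le> M * t powr (- a)"
proof -
  define M where "M = t0 powr a * E t0 - B / (a+1-p) * t0 powr (a+1-p)"
  have "E t \<le> M * t powr (- a)" if "t0 \<le> t" for t
  proof -
    have "t powr a * E t - B / (a+1-p) * t powr (a+1-p) \<le> M"
      unfolding M_def using assms that by (intro powr_weighted_nonincreasing[where E' = E']) auto
    moreover have "B / (a+1-p) * t powr (a+1-p) \<le> 0"
      using assms by (auto intro!: mult_nonpos_nonneg divide_nonneg_neg)
    ultimately have "t powr a * E t \<le> M"
      by linarith
    then have "t powr (- a) * (t powr a * E t) \<le> t powr (- a) * M"
      by (intro mult_left_mono) auto
    then show ?thesis
      using assms that by (simp add: powr_minus field_simps)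
  qed
  then show ?thesis by blast
qed

lemma decay_at_forcing_rate:
  fixes E E' :: "real \<Rightarrow> real"
  assumes "t0 > 0" "continuous_on {t0..} E"
    and "\<And>t. t > t0 \<Longrightarrow> (E has_real_derivative E' t) (at t)"
    and "\<And>t. t > t0 \<Longrightarrow> E' t \<le> - (a/t) * E t + B * t powr (- p)"
    and "a > p - 1"
  shows "\<exists>M. \<forall>t\<ge>t0. E t \<le> M * t powr (1 - p)"
proof -
  define c where "c = a + 1 - p"
  define A where "A = max 0 (t0 powr a * E t0 - B / c * t0 powr c)"
  have "c > 0" using assms by (simp add: c_def)
  have "E t \<le> (A * t0 powr (- c) + B / c) * t powr (1 - p)" if "t0 \<le> t" for t
  proof -
    have "t > 0" using assms that by linarith
    have "t powr a * E t \<le> A + B / c * t powr c"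
      using powr_weighted_nonincreasing[where E' = E', OF assms(1-4)] \<open>c > 0\<close> that
      unfolding A_def c_def by fastforce
    then have "t powr (- a) * (t powr a * E t) \<le> t powr (- a) * (A + B / c * t powr c)"
      by (intro mult_left_mono) auto
    then have "E t \<le> A * t powr (- c) * t powr (1 - p) + B / c * t powr (1 - p)"
      using \<open>t > 0\<close> by (simp add: c_def powr_minus powr_add powr_diff field_simps)
    moreover have "A * t powr (- c) \<le> A * t0 powr (- c)"
      using \<open>c > 0\<close> assms that by (auto simp: A_def intro!: mult_left_mono powr_mono2')
    ultimately show ?thesis
      by (smt (verit) mult_right_mono powr_ge_zero distrib_right)
  qed
  then show ?thesis by blast
qed

lemma bigo_of_differences_and_sum:
  fixes x :: "nat \<Rightarrow> 'a \<Rightarrow> real"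
  assumes differences: "\<And>k. 1 \<le> k \<Longrightarrow> k < K \<Longrightarrow> (\<lambda>t. x (k+1) t - x k t) \<in> O[F](g)"
    and sum: "(\<lambda>t. \<Sum>j=1..K. x j t) \<in> O[F](g)"
    and k: "k \<in> {1..K}"
  shows "x k \<in> O[F](g)"
proof -
  have ordered: "(\<lambda>t. x k t - x j t) \<in> O[F](g)" if "1 \<le> j" "j \<le> k" "k \<le> K" for j k
  proof -
    have "(\<lambda>t. \<Sum>i=j..<k. x (i+1) t - x i t) \<in> O[F](g)"
      using that by (intro big_sum_in_bigo differences) auto
    moreover have "(\<Sum>i=j..<k. x (i+1) t - x i t) = x k t - x j t" for t
      using sum_Suc_diff'[OF \<open>j \<le> k\<close>, of "\<lambda>i. x i t"] by simp
    ultimately show ?thesis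
      by simp
  qed
  have "(\<lambda>t. x k t - x j t) \<in> O[F](g)" if "j \<in> {1..K}" for j
  proof (cases "j \<le> k")
    case True
    then show ?thesis using that k ordered by auto
  next
    case False
    then have "(\<lambda>t. x j t - x k t) \<in> O[F](g)"
      using that k ordered by auto
    then have "(\<lambda>t. - (x j t - x k t)) \<in> O[F](g)"
      by (rule landau_o.big.uminus_in_iff[THEN iffD2])
    then show ?thesis
      by (simp only: minus_diff_eq)
  qed
  then have "(\<lambda>t. (\<Sum>j=1..K. x j t) + (\<Sum>j=1..K. x k t - x j t)) \<in> O[F](g)"
    by (intro sum_in_bigo(1) sum big_sum_in_bigo)
  moreover have "(\<Sum>j=1..K. x j t) + (\<Sum>j=1..K. x k t - x j t) = real K * x k t" for t
    by (simp add: sum_subtractf)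
  ultimately show ?thesis
    using k by simp
qed

definition gap :: "(nat \<Rightarrow> real \<Rightarrow> real) \<Rightarrow> nat \<Rightarrow> real \<Rightarrow> real" where
  "gap \<xi> k t = \<xi> (k+1) t - \<xi> k t"

definition flux :: "nat \<Rightarrow> (nat \<Rightarrow> real \<Rightarrow> real) \<Rightarrow> nat \<Rightarrow> real \<Rightarrow> real" where
  "flux K \<xi> k t = gam K k * (exp (- gap \<xi> k t) - 1)"

lemma flux_0 [simp]: "flux K \<xi> 0 t = 0"
  and flux_last [simp]: "flux K \<xi> K t = 0"
  by (simp_all add: flux_def gam_def)

lemma lattice_equations_flux_form:
  assumes K: "K \<ge> 2"
    and eq1: "\<xi>' 1 t = - (1/t) * gam K 1 * (exp (- (\<xi> 2 t - \<xi> 1 t)) - 1) + r 1 t"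
    and eqk: "\<And>k. 2 \<le> k \<Longrightarrow> k \<le> K - 1 \<Longrightarrow>
       \<xi>' k t = (1/t) * (gam K (k - 1) * (exp (- (\<xi> k t - \<xi> (k - 1) t)) - 1)
                         - gam K k * (exp (- (\<xi> (k + 1) t - \<xi> k t)) - 1)) + r k t"
    and eqK: "\<xi>' K t = (1/t) * gam K (K - 1) * (exp (- (\<xi> K t - \<xi> (K - 1) t)) - 1) + r K t"
    and k: "1 \<le> k" "k \<le> K"
  shows "\<xi>' k t = (flux K \<xi> (k-1) t - flux K \<xi> k t) / t + r k t"
proof -
  consider "k = 1" | "k = K" | "2 \<le> k" "k \<le> K - 1"
    using k K by linarith
  then show ?thesis
  proof cases
    case 1
    have "flux K \<xi> 1 t = gam K 1 * (exp (- (\<xi> 2 t - \<xi> 1 t)) - 1)"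
      by (simp add: flux_def gap_def numeral_2_eq_2)
    then show ?thesis
      using 1 eq1 by (simp add: diff_divide_distrib)
  next
    case 2
    then show ?thesis
      using eqK K by (simp add: flux_def gap_def diff_divide_distrib)
  next
    case 3
    then show ?thesis
      using eqk[OF 3] by (simp add: flux_def gap_def diff_divide_distrib)
  qed
qed

locale perturbed_lattice_flow =
  fixes K :: nat and \<theta> T C :: real and \<xi> \<xi>' r :: "nat \<Rightarrow> real \<Rightarrow> real"
  assumes K_ge_2: "K \<ge> 2"
    and theta_gt_1: "1 < \<theta>" and theta_lt: "\<theta> < 3/2"
    and T_pos: "T > 0"
    and deriv: "\<And>k t. 1 \<le> k \<Longrightarrow> k \<le> K \<Longrightarrow> t \<ge> T \<Longrightarrow>
      (\<xi> k has_real_derivative \<xi>' k t) (at t within {T..})"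
    and flux_form: "\<And>k t. 1 \<le> k \<Longrightarrow> k \<le> K \<Longrightarrow> t \<ge> T \<Longrightarrow>
      \<xi>' k t = (flux K \<xi> (k-1) t - flux K \<xi> k t) / t + r k t"
    and remainder_bound: "\<And>k t. 1 \<le> k \<Longrightarrow> k \<le> K \<Longrightarrow> t \<ge> T \<Longrightarrow> \<bar>r k t\<bar> \<le> C * t powr (- \<theta>)"
begin

definition energy :: "real \<Rightarrow> real" where
  "energy t = (\<Sum>k=1..K-1. gam K k * expgap (gap \<xi> k t))"

definition dissipation :: "real \<Rightarrow> real" where
  "dissipation t = (\<Sum>k=1..K. (flux K \<xi> (k-1) t - flux K \<xi> k t)\<^sup>2)"

definition energy_deriv :: "real \<Rightarrow> real" where
  "energy_deriv t = - dissipation t / t - (\<Sum>k=1..K. (flux K \<xi> (k-1) t - flux K \<xi> k t) * r k t)"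

lemma has_real_derivative_at:
  assumes "1 \<le> k" "k \<le> K" "t > T"
  shows "(\<xi> k has_real_derivative \<xi>' k t) (at t)"
proof -
  have "(\<xi> k has_real_derivative \<xi>' k t) (at t within {T..})"
    using deriv assms by simp
  then have "(\<xi> k has_real_derivative \<xi>' k t) (at t within {T<..})"
    by (rule has_field_derivative_subset) auto
  moreover have "at t within {T<..} = at t"
    using assms(3) by (intro at_within_open) auto
  ultimately show ?thesis by simp
qed

lemma energy_has_derivative:
  assumes "t > T"
  shows "(energy has_real_derivative energy_deriv t) (at t)"
proof -
  let ?\<Delta> = "\<lambda>k. flux K \<xi> (k-1) t - flux K \<xi> k t"
  have "(energy has_real_derivative
      (\<Sum>k=1..K-1. gam K k * (1 - exp (- gap \<xi> k t)) * (\<xi>' (k+1) t - \<xi>' k t))) (at t)"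
    unfolding energy_def
  proof (rule DERIV_sum)
    fix k assume k: "k \<in> {1..K-1}"
    have "((\<lambda>s. gap \<xi> k s) has_real_derivative \<xi>' (k+1) t - \<xi>' k t) (at t)"
      unfolding gap_def using k assms by (intro DERIV_diff has_real_derivative_at) auto
    then show "((\<lambda>s. gam K k * expgap (gap \<xi> k s)) has_real_derivative
        gam K k * (1 - exp (- gap \<xi> k t)) * (\<xi>' (k+1) t - \<xi>' k t)) (at t)"
      unfolding expgap_def by (auto intro!: derivative_eq_intros simp: algebra_simps)
  qed
  moreover have "(\<Sum>k=1..K-1. gam K k * (1 - exp (- gap \<xi> k t)) * (\<xi>' (k+1) t - \<xi>' k t))
      = - (\<Sum>k=1..K-1. flux K \<xi> k t * (\<xi>' (k+1) t - \<xi>' k t))"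
    by (simp add: flux_def sum_negf[symmetric] algebra_simps)
  also have "\<dots> = - (\<Sum>k=1..K. ?\<Delta> k * \<xi>' k t)"
    using sum_mult_forward_diff_eq[of K "\<lambda>k. flux K \<xi> k t" "\<lambda>k. \<xi>' k t"] K_ge_2 by simp
  also have "(\<Sum>k=1..K. ?\<Delta> k * \<xi>' k t) = (\<Sum>k=1..K. (?\<Delta> k)\<^sup>2 / t + ?\<Delta> k * r k t)"
    using assms by (intro sum.cong refl) (simp add: flux_form power2_eq_square algebra_simps)
  also have "- \<dots> = energy_deriv t"
    by (simp add: energy_deriv_def dissipation_def sum.distrib sum_divide_distrib)
  finally show ?thesis by simp
qed

lemma continuous_on_energy: "continuous_on {T..} energy"
proof -
  have "continuous_on {T..} (\<xi> k)" if "1 \<le> k" "k \<le> K" for k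
    using deriv[OF that] by (intro DERIV_continuous_on) auto
  then show ?thesis
    unfolding energy_def expgap_def gap_def by (intro continuous_intros) auto
qed

lemma energy_nonneg: "0 \<le> energy t"
  unfolding energy_def by (intro sum_nonneg mult_nonneg_nonneg gam_nonneg expgap_nonneg) auto

lemma expgap_gap_le_energy:
  assumes "k \<in> {1..K-1}"
  shows "expgap (gap \<xi> k t) \<le> 2 * energy t"
proof -
  have "(1/2) * expgap (gap \<xi> k t) \<le> gam K k * expgap (gap \<xi> k t)"
    using assms gam_ge_half[of k K] expgap_nonneg by (intro mult_right_mono) auto
  also have "\<dots> \<le> energy t"
    unfolding energy_def using assms
    by (intro member_le_sum mult_nonneg_nonneg gam_nonneg expgap_nonneg) auto
  finally show ?thesis by simp
qed

text \<open>Young's inequality with weight \<open>\<epsilon>\<close> absorbs the forcing into the dissipation.\<close>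

lemma energy_deriv_le:
  assumes "t > T" "\<epsilon> > 0"
  shows "energy_deriv t \<le> - ((1-\<epsilon>)/t) * dissipation t + real K * C\<^sup>2 / (4*\<epsilon>) * t powr (- (2*\<theta> - 1))"
proof -
  let ?\<Delta> = "\<lambda>k. flux K \<xi> (k-1) t - flux K \<xi> k t"
  have "t > 0" using assms T_pos by linarith
  have forcing: "- (?\<Delta> k * r k t) \<le> (\<epsilon>/t) * (?\<Delta> k)\<^sup>2 + C\<^sup>2 / (4*\<epsilon>) * t powr (- (2*\<theta> - 1))"
    if "k \<in> {1..K}" for k
  proof -
    have "\<bar>r k t\<bar>\<^sup>2 \<le> (C * t powr (- \<theta>))\<^sup>2"
      using that assms by (intro power_mono remainder_bound) auto
    also have "(C * t powr (- \<theta>))\<^sup>2 = C\<^sup>2 * t powr (- 2*\<theta>)"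
      by (simp add: power_mult_distrib power2_eq_square flip: powr_add)
    finally have "(t / (4*\<epsilon>)) * (r k t)\<^sup>2 \<le> (t / (4*\<epsilon>)) * (C\<^sup>2 * t powr (- 2*\<theta>))"
      using \<open>t > 0\<close> assms by (intro mult_left_mono) auto
    also have "\<dots> = C\<^sup>2 / (4*\<epsilon>) * t powr (- (2*\<theta> - 1))"
      using \<open>t > 0\<close> by (simp add: powr_diff powr_minus field_simps)
    finally show ?thesis
      using neg_mult_le_weighted_squares[OF \<open>\<epsilon> > 0\<close> \<open>t > 0\<close>, of "?\<Delta> k" "r k t"] by linarith
  qed
  have "- (\<Sum>k=1..K. ?\<Delta> k * r k t) = (\<Sum>k=1..K. - (?\<Delta> k * r k t))"
    by (simp add: sum_negf)
  also have "\<dots> \<le> (\<Sum>k=1..K. (\<epsilon>/t) * (?\<Delta> k)\<^sup>2 + C\<^sup>2 / (4*\<epsilon>) * t powr (- (2*\<theta> - 1)))"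
    by (intro sum_mono forcing)
  also have "\<dots> = (\<epsilon>/t) * dissipation t + real K * C\<^sup>2 / (4*\<epsilon>) * t powr (- (2*\<theta> - 1))"
    by (simp add: dissipation_def sum.distrib sum_distrib_left)
  finally show ?thesis
    unfolding energy_deriv_def by (simp add: diff_divide_distrib algebra_simps)
qed

lemma energy_le_dissipation:
  assumes "\<forall>k\<in>{1..K-1}. gap \<xi> k t \<le> Y"
  shows "exp (- Y) * energy t \<le> dissipation t"
proof -
  have "exp (- Y) * energy t = (\<Sum>k=1..K-1. exp (- Y) * (gam K k * expgap (gap \<xi> k t)))"
    by (simp add: energy_def sum_distrib_left)
  also have "\<dots> \<le> (\<Sum>k=1..K-1. (flux K \<xi> k t)\<^sup>2 / gam K k)"
  proof (rule sum_mono)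
    fix k assume k: "k \<in> {1..K-1}"
    let ?y = "gap \<xi> k t"
    have "gam K k \<ge> 1/2"
      using k K_ge_2 by (intro gam_ge_half) auto
    have "exp (- Y) * (gam K k * expgap ?y) \<le> exp (- ?y) * (gam K k * expgap ?y)"
      using assms k \<open>gam K k \<ge> 1/2\<close> expgap_nonneg by (intro mult_right_mono) auto
    also have "\<dots> \<le> gam K k * (exp (- ?y) - 1)\<^sup>2"
      using \<open>gam K k \<ge> 1/2\<close> exp_neg_mult_expgap_le[of ?y] by (simp add: mult.left_commute)
    also have "\<dots> = (flux K \<xi> k t)\<^sup>2 / gam K k"
      using \<open>gam K k \<ge> 1/2\<close> by (simp add: flux_def power2_eq_square)
    finally show "exp (- Y) * (gam K k * expgap ?y) \<le> (flux K \<xi> k t)\<^sup>2 / gam K k" .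
  qed
  also have "\<dots> \<le> dissipation t"
    unfolding dissipation_def using K_ge_2 by (intro sum_sq_div_gam_le_sum_sq_diff) auto
  finally show ?thesis .
qed

lemma energy_decay:
  assumes t0: "T \<le> t0" and \<epsilon>: "0 < \<epsilon>"
    and damping: "\<And>s. s > t0 \<Longrightarrow> a * energy s \<le> (1-\<epsilon>) * dissipation s"
  shows "a < 2*\<theta> - 2 \<Longrightarrow> \<exists>M. \<forall>t\<ge>t0. energy t \<le> M * t powr (- a)"
    and "a > 2*\<theta> - 2 \<Longrightarrow> \<exists>M. \<forall>t\<ge>t0. energy t \<le> M * t powr (2 - 2*\<theta>)"
proof -
  define B where "B = real K * C\<^sup>2 / (4*\<epsilon>)"
  have "t0 > 0" using t0 T_pos by linarith
  have energy_cont: "continuous_on {t0..} energy"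
    using continuous_on_energy by (rule continuous_on_subset) (use t0 in auto)
  have energy_has_deriv: "(energy has_real_derivative energy_deriv s) (at s)" if "s > t0" for s
    using that t0 by (intro energy_has_derivative) auto
  have ineq: "energy_deriv s \<le> - (a/s) * energy s + B * s powr (- (2*\<theta> - 1))" if "s > t0" for s
  proof -
    have "a * energy s / s \<le> (1-\<epsilon>) * dissipation s / s"
      using damping[OF that] that \<open>t0 > 0\<close> by (intro divide_right_mono) auto
    then show ?thesis
      using energy_deriv_le[of s \<epsilon>] that t0 \<epsilon> unfolding B_def by simp
  qed
  show "a < 2*\<theta> - 2 \<Longrightarrow> \<exists>M. \<forall>t\<ge>t0. energy t \<le> M * t powr (- a)"
    using \<epsilon> by (intro decay_at_damping_rate[OF \<open>t0 > 0\<close> energy_cont energy_has_deriv ineq]) (auto simp: B_def)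
  show "a > 2*\<theta> - 2 \<Longrightarrow> \<exists>M. \<forall>t\<ge>t0. energy t \<le> M * t powr (2 - 2*\<theta>)"
    using decay_at_forcing_rate[OF \<open>t0 > 0\<close> energy_cont energy_has_deriv ineq] by simp
qed

lemma gaps_bounded: "\<exists>Y. \<forall>t\<ge>T. \<forall>k\<in>{1..K-1}. gap \<xi> k t \<le> Y"
proof -
  obtain M where M: "\<And>t. t \<ge> T \<Longrightarrow> energy t \<le> M * t powr (- 0)"
    using energy_decay(1)[of T 1 0] theta_gt_1 by auto
  have "gap \<xi> k t \<le> 2 * M + 1" if "t \<ge> T" "k \<in> {1..K-1}" for t k
    using expgap_ge_linear[of "gap \<xi> k t"] expgap_gap_le_energy[OF that(2), of t] M[OF that(1)]
      that(1) T_pos by simp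
  then show ?thesis by blast
qed

lemma energy_tendsto_0: "(energy \<longlongrightarrow> 0) at_top"
proof -
  obtain Y where Y: "\<forall>t\<ge>T. \<forall>k\<in>{1..K-1}. gap \<xi> k t \<le> Y"
    using gaps_bounded by blast
  define a where "a = min (exp (- Y) / 2) (\<theta> - 1)"
  have "a > 0" "a < 2*\<theta> - 2"
    using theta_gt_1 by (auto simp: a_def)
  have "a * energy s \<le> (1 - 1/2) * dissipation s" if "s > T" for s
  proof -
    have "a * energy s \<le> (exp (- Y) / 2) * energy s"
      unfolding a_def by (intro mult_right_mono energy_nonneg min.cobounded1)
    also have "\<dots> \<le> (1 - 1/2) * dissipation s"
      using energy_le_dissipation[of s Y] Y that by simp
    finally show ?thesis .
  qed
  then obtain M where M: "\<And>t. t \<ge> T \<Longrightarrow> energy t \<le> M * t powr (- a)"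
    using energy_decay(1)[of T "1/2" a] \<open>a < 2*\<theta> - 2\<close> by auto
  have upper: "\<forall>\<^sub>F t in at_top. energy t \<le> M * t powr (- a)"
    using M by (intro eventually_at_top_linorderI)
  have lim: "((\<lambda>t. M * t powr (- a)) \<longlongrightarrow> 0) at_top"
    using \<open>a > 0\<close> by (intro tendsto_mult_right_zero tendsto_neg_powr filterlim_ident) simp
  show ?thesis
    by (rule tendsto_sandwich[OF _ upper tendsto_const lim]) (simp add: energy_nonneg)
qed

lemma eventually_gaps_le:
  assumes "0 < \<eta>" "\<eta> \<le> 2"
  shows "\<forall>\<^sub>F t in at_top. \<forall>k\<in>{1..K-1}. gap \<xi> k t \<le> \<eta>"
proof -
  have "\<forall>\<^sub>F t in at_top. energy t < \<eta>\<^sup>2 / 8"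
    by (rule order_tendstoD(2)[OF energy_tendsto_0]) (use assms in simp)
  then show ?thesis
  proof eventually_elim
    case (elim t)
    show ?case
    proof (rule ballI, rule ccontr)
      fix k assume k: "k \<in> {1..K-1}" and "\<not> gap \<xi> k t \<le> \<eta>"
      then have "expgap \<eta> \<le> expgap (gap \<xi> k t)"
        using assms by (intro expgap_mono) auto
      moreover have "\<eta>\<^sup>2 / 4 \<le> expgap \<eta>"
        using assms by (intro expgap_ge_square)
      ultimately show False
        using expgap_gap_le_energy[OF k, of t] elim by linarith
    qed
  qed
qed

text \<open>Once all gaps are below \<open>\<eta>\<close>, the damping constant \<open>\<theta> - 1/2 = 1 - 2\<eta>\<close> stays below
  \<open>(1 - \<eta>) exp (- \<eta>)\<close>, which beats the forcing rate exactly when \<open>\<theta> < 3/2\<close>.\<close>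

lemma eventually_energy_le_powr: "\<exists>M. \<forall>\<^sub>F t in at_top. energy t \<le> M * t powr (2 - 2*\<theta>)"
proof -
  define \<eta> where "\<eta> = (3/2 - \<theta>) / 2"
  have \<eta>: "0 < \<eta>" "\<eta> \<le> 1/4"
    using theta_gt_1 theta_lt by (auto simp: \<eta>_def)
  obtain t1 where t1: "\<forall>t\<ge>t1. \<forall>k\<in>{1..K-1}. gap \<xi> k t \<le> \<eta>"
    using eventually_gaps_le[of \<eta>] \<eta> unfolding eventually_at_top_linorder by auto
  define t0 where "t0 = max T t1"
  have "(\<theta> - 1/2) * energy s \<le> (1-\<eta>) * dissipation s" if "s > t0" for s
  proof -
    have "\<theta> - 1/2 \<le> (\<theta> - 1/2) + \<eta> * \<eta>"
      by simp
    also have "\<dots> = (1-\<eta>) * (1-\<eta>)"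
      by (simp add: \<eta>_def field_simps)
    also have "\<dots> \<le> (1-\<eta>) * exp (- \<eta>)"
      using exp_ge_add_one_self[of "- \<eta>"] \<eta> by (intro mult_left_mono) auto
    finally have "(\<theta> - 1/2) * energy s \<le> (1-\<eta>) * exp (- \<eta>) * energy s"
      by (intro mult_right_mono energy_nonneg)
    also have "\<dots> = (1-\<eta>) * (exp (- \<eta>) * energy s)"
      by simp
    also have "\<dots> \<le> (1-\<eta>) * dissipation s"
      using energy_le_dissipation[of s \<eta>] t1 that \<eta> by (intro mult_left_mono) (auto simp: t0_def)
    finally show ?thesis .
  qed
  then obtain M where "\<forall>t\<ge>t0. energy t \<le> M * t powr (2 - 2*\<theta>)"
    using energy_decay(2)[of t0 \<eta> "\<theta> - 1/2"] \<eta> theta_lt by (auto simp: t0_def)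
  then have "\<forall>\<^sub>F t in at_top. energy t \<le> M * t powr (2 - 2*\<theta>)"
    unfolding eventually_at_top_linorder by blast
  then show ?thesis ..
qed

lemma gap_bigo:
  assumes "1 \<le> k" "k < K"
  shows "gap \<xi> k \<in> O[at_top](\<lambda>t. t powr (1 - \<theta>))"
proof -
  have k: "k \<in> {1..K-1}"
    using assms by auto
  obtain M where "\<forall>\<^sub>F t in at_top. energy t \<le> M * t powr (2 - 2*\<theta>)"
    using eventually_energy_le_powr by blast
  moreover have "\<forall>\<^sub>F t in at_top. \<forall>k\<in>{1..K-1}. gap \<xi> k t \<le> 2"
    by (rule eventually_gaps_le) auto
  ultimately have "\<forall>\<^sub>F t in at_top. norm (gap \<xi> k t) \<le> sqrt (8 * max 0 M) * norm (t powr (1 - \<theta>))"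
  proof eventually_elim
    case (elim t)
    let ?y = "gap \<xi> k t"
    have "?y\<^sup>2 / 4 \<le> expgap ?y"
      using elim k by (intro expgap_ge_square) auto
    also have "\<dots> \<le> 2 * (M * t powr (2 - 2*\<theta>))"
      using expgap_gap_le_energy[OF k, of t] elim by linarith
    also have "\<dots> \<le> 2 * (max 0 M * (t powr (1 - \<theta>))\<^sup>2)"
      by (simp add: mult_right_mono power2_eq_square flip: powr_add)
    finally have "?y\<^sup>2 \<le> (8 * max 0 M) * (t powr (1 - \<theta>))\<^sup>2"
      by simp
    then have "sqrt (?y\<^sup>2) \<le> sqrt ((8 * max 0 M) * (t powr (1 - \<theta>))\<^sup>2)"
      by (rule real_sqrt_le_mono)
    then show ?case
      by (simp add: real_sqrt_mult)
  qed
  then show ?thesis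
    by (rule bigoI)
qed

end

theorem mainTheorem14:
  fixes K :: nat and \<theta> T C :: real
    and \<xi> \<xi>' r :: "nat \<Rightarrow> real \<Rightarrow> real"
  assumes K: "K \<ge> 2"
    and theta: "1 < \<theta>" "\<theta> < 3/2"
    and T: "T > 0"
    and deriv: "\<And>k t. 1 \<le> k \<Longrightarrow> k \<le> K \<Longrightarrow> t \<ge> T \<Longrightarrow>
                  (\<xi> k has_real_derivative \<xi>' k t) (at t within {T..})"
    and cont: "\<And>k. 1 \<le> k \<Longrightarrow> k \<le> K \<Longrightarrow> continuous_on {T..} (\<xi>' k)"
    and eq1: "\<And>t. t \<ge> T \<Longrightarrow>
       \<xi>' 1 t = - (1/t) * gam K 1 * (exp (- (\<xi> 2 t - \<xi> 1 t)) - 1) + r 1 t"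
    and eqk: "\<And>k t. 2 \<le> k \<Longrightarrow> k \<le> K - 1 \<Longrightarrow> t \<ge> T \<Longrightarrow>
       \<xi>' k t = (1/t) * (gam K (k - 1) * (exp (- (\<xi> k t - \<xi> (k - 1) t)) - 1)
                         - gam K k * (exp (- (\<xi> (k + 1) t - \<xi> k t)) - 1)) + r k t"
    and eqK: "\<And>t. t \<ge> T \<Longrightarrow>
       \<xi>' K t = (1/t) * gam K (K - 1) * (exp (- (\<xi> K t - \<xi> (K - 1) t)) - 1) + r K t"
    and rbound: "\<And>k t. 1 \<le> k \<Longrightarrow> k \<le> K \<Longrightarrow> t \<ge> T \<Longrightarrow> \<bar>r k t\<bar> \<le> C * t powr (- \<theta>)"
    and sumbound: "\<And>t. t \<ge> T \<Longrightarrow> \<bar>\<Sum>k=1..K. \<xi> k t\<bar> \<le> C * t powr (1 - \<theta>)"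
  shows "\<forall>k\<in>{1..K}. (\<xi> k) \<in> O[at_top](\<lambda>t. t powr (1 - \<theta>))"
proof -
  interpret perturbed_lattice_flow K \<theta> T C \<xi> \<xi>' r
  proof
    show "\<xi>' k t = (flux K \<xi> (k-1) t - flux K \<xi> k t) / t + r k t"
      if "1 \<le> k" "k \<le> K" "T \<le> t" for k t
      using that by (intro lattice_equations_flux_form[OF K] eq1 eqk eqK) auto
  qed (fact K theta T deriv rbound)+
  have sum: "(\<lambda>t. \<Sum>k=1..K. \<xi> k t) \<in> O[at_top](\<lambda>t. t powr (1 - \<theta>))"
    using sumbound by (intro bigoI[of _ C] eventually_at_top_linorderI[of T]) auto
  have gaps: "(\<lambda>t. \<xi> (j+1) t - \<xi> j t) \<in> O[at_top](\<lambda>t. t powr (1 - \<theta>))"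
    if "1 \<le> j" "j < K" for j
    using gap_bigo[OF that] unfolding gap_def[abs_def] .
  show ?thesis
    using bigo_of_differences_and_sum[OF gaps sum] by blast
qed

end
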